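(* Let $Z\in\mathbb S^n$ be nonsingular with eigenvalue decomposition $Z=Q\operatorname{diag}(\lambda_1,\dots,\lambda_r,\lambda_{r+1},\dots,\lambda_n)Q^\top$, where $\lambda_1\ge\dots\ge\lambda_r>0>\lambda_{r+1}\ge\dots\ge\lambda_n$ and $Q$ is orthogonal. Then there exist positive constants $C_{\mathrm{EB}}$ and $\alpha_{\mathrm{EB}}$ such that for all $H\in\mathbb S^n$ with $\|H\|_2\le C_{\mathrm{EB}}$, $$\big\|\Pi_{\mathbb S^n_+}(Z+H)-\Pi_{\mathbb S^n_+}(Z)-Q(\Omega\circ\tilde H)Q^\top\big\|_2\le\alpha_{\mathrm{EB}}\,\|\tilde H_O\|_2\,\|H\|_2,$$ where $\tilde H:=Q^\top HQ=\begin{pmatrix}\tilde H_X&\tilde H_O^\top\\ \tilde H_O&\tilde H_S\end{pmatrix}$ with $\tilde H_X\in\mathbb S^r$, $\tilde H_S\in\mathbb S^{n-r}$, $\tilde H_O\in\mathbb R^{(n-r)\times r}$.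
   Context: $\mathbb S^n$ is the space of real symmetric $n\times n$ matrices, $\Pi_{\mathbb S^n_+}$ the Frobenius-orthogonal projection onto the positive semidefinite cone, $\|\cdot\|_2$ the spectral norm, $\circ$ the Hadamard (entrywise) product. $\Omega=\begin{pmatrix}E_r&\Theta^\top\\ \Theta&0\end{pmatrix}$ where $E_r$ is the $r\times r$ all-ones matrix and $\Theta\in\mathbb R^{(n-r)\times r}$ has entries $\Theta_{ij}=\lambda_j/(\lambda_j-\lambda_{i+r})$ for $i\in[n-r]$, $j\in[r]$. *)

theory Defs
  imports "HOL-Analysis.Analysis"
begin

definition spec_norm :: "real^'n^'m \<Rightarrow> real" where
  "spec_norm A = onorm (\<lambda>x. A *v x)"

text \<open>Note: the library norm on real^'n^'n is the Frobenius norm.\<close>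
definition psd :: "real^'n^'n \<Rightarrow> bool" where
  "psd A \<longleftrightarrow> transpose A = A \<and> (\<forall>x. 0 \<le> x \<bullet> (A *v x))"

definition proj_psd :: "real^'n^'n \<Rightarrow> real^'n^'n" where
  "proj_psd Z = (THE P. psd P \<and> (\<forall>Y. psd Y \<longrightarrow> norm (Z - P) \<le> norm (Z - Y)))"

definition diag_mat :: "('n \<Rightarrow> real) \<Rightarrow> real^'n^'n" where
  "diag_mat l = (\<chi> i j. if i = j then l i else 0)"

definition hadamard :: "real^'n^'m \<Rightarrow> real^'n^'m \<Rightarrow> real^'n^'m" where
  "hadamard A B = (\<chi> i j. A $ i $ j * B $ i $ j)"

text \<open>With eigenvalues sorted decreasingly, index i lies in the
  first block (1..r) iff l i > 0 and in the second block iff l i < 0.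
  Entry (r+i, j) of Omega is Theta_ij = l_j/(l_j - l_(i+r)); entry (j, r+i) is Theta_ij too.\<close>
definition Omega :: "('n \<Rightarrow> real) \<Rightarrow> real^'n^'n" where
  "Omega l = (\<chi> i j.
     if 0 < l i \<and> 0 < l j then 1
     else if l i < 0 \<and> 0 < l j then l j / (l j - l i)
     else if 0 < l i \<and> l j < 0 then l i / (l i - l j)
     else 0)"

text \<open>Off-diagonal block H_O (rows in the negative block, columns in the positive block),
  zero-padded to an n x n matrix (zero padding does not change the spectral norm).\<close>
definition off_block :: "('n \<Rightarrow> real) \<Rightarrow> real^'n^'n \<Rightarrow> real^'n^'n" where
  "off_block l A = (\<chi> i j. if l i < 0 \<and> 0 < l j then A $ i $ j else 0)"

end

theory Submission
  imports Defs
begin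

text \<open>Conjugating by Q reduces everything to Z = diag l and a small symmetric H, measured in the
  Frobenius norm, which is within a factor n of the spectral norm. The eigenvalues of
  A = diag l + H stay at distance at least \<delta>/2 from 0, so the projection of A onto the PSD cone
  is A Pr, where Pr is the spectral projection onto the positive eigenspace of A; Pr commutes
  with A. Since diag l is negative on the rows of Pr in the negative index block (and positive
  on those of I - Pr in the positive block), these rows are O(H) by a Sylvester-type estimate, and
  idempotence of Pr makes the diagonal blocks of Pr - Epos quadratically small. Read entrywise,
  the commutation relation is (l_i - l_j) Pr_ij = (eps_i - eps_j) H_ij + [Pr - Epos, H]_ij,
  with eps the indicator of l > 0: on the off-diagonal blocks it produces the divided differences
  of Omega, and it bounds the off-diagonal block of Pr by that of H. Every remainder is then a
  product of this block with H.\<close>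

lemma matrix_add_rdistrib: "((A::'a::semiring_1^'n^'m) + B) ** C = A ** C + B ** C"
  by (vector matrix_matrix_mult_def sum.distrib field_simps)

lemma matrix_diff_ldistrib: "(A::'a::ring_1^'n^'m) ** (B - C) = A ** B - A ** C"
  by (vector matrix_matrix_mult_def sum_subtractf field_simps)

lemma matrix_diff_rdistrib: "((A::'a::ring_1^'n^'m) - B) ** C = A ** C - B ** C"
  by (vector matrix_matrix_mult_def sum_subtractf field_simps)

lemma matrix_neg_ldistrib: "(- (A::'a::ring_1^'n^'m)) ** B = - (A ** B)"
  by (vector matrix_matrix_mult_def sum_negf)

lemma matrix_neg_rdistrib: "(A::'a::ring_1^'n^'m) ** (- B) = - (A ** B)"
  by (vector matrix_matrix_mult_def sum_negf)

lemma transpose_add: "transpose ((A::'a::semiring_1^'n^'m) + B) = transpose A + transpose B"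
  by (vector transpose_def)

lemma transpose_minus: "transpose (- (A::'a::ring_1^'n^'m)) = - transpose A"
  by (vector transpose_def)

lemma transpose_diff: "transpose ((A::'a::ring_1^'n^'m) - B) = transpose A - transpose B"
  by (vector transpose_def)

lemma matrix_mult_row: "((A::'a::comm_semiring_1^'n^'m) ** B) $ i = transpose B *v (A $ i)"
  unfolding vec_eq_iff matrix_matrix_mult_def matrix_vector_mult_def transpose_def
  by (simp add: mult.commute)

lemma symmetric_matrix_inner:
  assumes "transpose A = A"
  shows "inner (A *v x) y = inner x (A *v (y::real^'n))"
  by (metis assms dot_lmul_matrix transpose_matrix_vector)

lemma transpose_diag_mat [simp]: "transpose (diag_mat d) = diag_mat d"
  by (vector transpose_def diag_mat_def)

lemma diag_mat_mult_nth [simp]: "(diag_mat d ** M) $ i $ j = d i * M $ i $ j"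
  unfolding diag_mat_def matrix_matrix_mult_def
  by (simp add: if_distrib if_distribR sum.delta cong: if_cong)

lemma mult_diag_mat_nth [simp]: "(M ** diag_mat d) $ i $ j = M $ i $ j * d j"
  unfolding diag_mat_def matrix_matrix_mult_def
  by (simp add: if_distrib if_distribR sum.delta' cong: if_cong)

lemma diag_mat_vector_nth [simp]: "(diag_mat d *v x) $ i = d i * x $ i"
  unfolding diag_mat_def matrix_vector_mult_def
  by (simp add: if_distrib if_distribR sum.delta cong: if_cong)

lemma diag_mat_mult_diag_mat: "diag_mat a ** diag_mat b = diag_mat (\<lambda>k. a k * b k)"
  by (simp add: vec_eq_iff) (simp add: diag_mat_def)

lemma diag_mat_add: "diag_mat a + diag_mat b = diag_mat (\<lambda>k. a k + b k)"
  by (vector diag_mat_def)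

lemma diag_mat_diff: "diag_mat a - diag_mat b = diag_mat (\<lambda>k. a k - b k)"
  by (vector diag_mat_def)

lemma diag_mat_1: "diag_mat (\<lambda>k. 1) = mat 1"
  by (vector diag_mat_def mat_def)

subsection \<open>The spectral theorem for real symmetric matrices\<close>

lemma linear_coefficient_zero_if_nonneg:
  fixes b c :: real
  assumes "\<And>t. 0 \<le> 2 * t * b + t\<^sup>2 * c"
  shows "b = 0"
proof -
  have "0 \<le> c" using assms[of 1] assms[of "-1"] by simp
  define t where "t = - b / (c + 1)"
  have b: "b = - (c + 1) * t" using \<open>0 \<le> c\<close> by (simp add: t_def field_simps)
  have "0 \<le> 2 * t * b + t\<^sup>2 * c" by (rule assms)
  also have "\<dots> = - t\<^sup>2 * (c + 2)" by (simp add: b algebra_simps power2_eq_square)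
  finally have "t = 0" using \<open>0 \<le> c\<close> by (simp add: mult_le_0_iff)
  then show ?thesis by (simp add: b)
qed

text \<open>With c = x A x, g z = c |z|^2 - z A z is nonnegative on S and vanishes at x, so its first
  variation 2 (y, c x - A x) vanishes for every y in S; and c x - A x itself lies in S.\<close>

lemma Rayleigh_maximiser_eigenvector:
  fixes A :: "real^'n^'n"
  assumes sym: "transpose A = A" and S: "subspace S"
    and invariant: "\<And>x. x \<in> S \<Longrightarrow> A *v x \<in> S"
    and xS: "x \<in> S" and nx: "norm x = 1"
    and max: "\<And>z. z \<in> S \<Longrightarrow> inner z (A *v z) \<le> inner x (A *v x) * (norm z)\<^sup>2"
  shows "A *v x = inner x (A *v x) *\<^sub>R x"
proof -
  define c where "c = inner x (A *v x)"
  define g where "g z = c * (norm z)\<^sup>2 - inner z (A *v z)" for z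
  define u where "u = c *\<^sub>R x - A *v x"
  have u_orthogonal: "inner y u = 0" if yS: "y \<in> S" for y
  proof (rule linear_coefficient_zero_if_nonneg)
    fix t :: real
    have "inner y (A *v x) = inner x (A *v y)"
      using symmetric_matrix_inner[OF sym, of y x] by (simp add: inner_commute)
    moreover have "(norm (x + t *\<^sub>R y))\<^sup>2 = 1 + 2 * t * inner x y + t\<^sup>2 * (norm y)\<^sup>2"
      unfolding power2_norm_eq_inner using nx[unfolded norm_eq_1]
      by (simp add: inner_add_left inner_add_right inner_commute[of y x] algebra_simps power2_eq_square)
    ultimately have "g (x + t *\<^sub>R y) = 2 * t * inner y u + t\<^sup>2 * g y"
      by (simp add: g_def u_def c_def inner_add_left inner_add_right inner_diff_right
          matrix_vector_right_distrib matrix_vector_mult_scaleR inner_commute[of y x]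
          algebra_simps power2_eq_square)
    moreover have "0 \<le> g (x + t *\<^sub>R y)"
      using S xS yS max[of "x + t *\<^sub>R y"] by (simp add: g_def c_def subspace_add subspace_scale)
    ultimately show "0 \<le> 2 * t * inner y u + t\<^sup>2 * g y" by simp
  qed
  have "u \<in> S" unfolding u_def using xS invariant S by (simp add: subspace_diff subspace_scale)
  then have "u = 0" using u_orthogonal[of u] by simp
  then show ?thesis by (simp add: u_def c_def)
qed

lemma symmetric_matrix_invariant_subspace_eigenvector:
  fixes A :: "real^'n^'n"
  assumes sym: "transpose A = A" and S: "subspace S" "S \<noteq> {0}"
    and invariant: "\<And>x. x \<in> S \<Longrightarrow> A *v x \<in> S"
  obtains x c where "x \<in> S" "norm x = 1" "A *v x = c *\<^sub>R x"
proof -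
  define K where "K = S \<inter> sphere 0 1"
  obtain y0 where y0: "y0 \<in> S" "y0 \<noteq> 0" using S subspace_0 by blast
  have "compact K" unfolding K_def
    using closed_subspace[OF S(1)] by (metis compact_Int_closed compact_sphere Int_commute)
  moreover have "(1 / norm y0) *\<^sub>R y0 \<in> K"
    using y0 S by (simp add: K_def subspace_scale)
  then have "K \<noteq> {}" by auto
  moreover have "continuous_on K (\<lambda>x. inner x (A *v x))"
    by (intro continuous_intros)
  ultimately obtain x where "x \<in> K"
    and max: "\<And>y. y \<in> K \<Longrightarrow> inner y (A *v y) \<le> inner x (A *v x)"
    using continuous_attains_sup by metis
  then have xS: "x \<in> S" and nx: "norm x = 1" by (auto simp: K_def)
  have "inner z (A *v z) \<le> inner x (A *v x) * (norm z)\<^sup>2" if "z \<in> S" for z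
  proof (cases "z = 0")
    case False
    have "(1 / norm z) *\<^sub>R z \<in> K" using False that S by (simp add: K_def subspace_scale)
    from max[OF this] have "(1 / norm z)\<^sup>2 * inner z (A *v z) \<le> inner x (A *v x)"
      by (simp add: matrix_vector_mult_scaleR power2_eq_square algebra_simps)
    then show ?thesis using False by (simp add: field_simps power2_eq_square)
  qed simp
  then show ?thesis
    using that xS nx Rayleigh_maximiser_eigenvector[OF sym S(1) invariant xS nx] by blast
qed

lemma symmetric_matrix_orthonormal_eigenvectors:
  fixes A :: "real^'n^'n"
  assumes sym: "transpose A = A" and "k \<le> CARD('n)"
  shows "\<exists>B. finite B \<and> card B = k \<and> pairwise orthogonal B \<and>
             (\<forall>x\<in>B. norm x = 1 \<and> (\<exists>c. A *v x = c *\<^sub>R x))"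
  using assms(2)
proof (induction k)
  case 0
  show ?case by (intro exI[of _ "{}"]) auto
next
  case (Suc k)
  then obtain B where fB: "finite B" and cB: "card B = k" and oB: "pairwise orthogonal B"
    and eB: "\<forall>x\<in>B. norm x = 1 \<and> (\<exists>c. A *v x = c *\<^sub>R x)" by auto
  define S where "S = {y. \<forall>x \<in> B. orthogonal x y}"
  have S: "subspace S" unfolding S_def by (rule subspace_orthogonal_to_vectors)
  have "dim B < DIM(real^'n)" using Suc.prems cB dim_le_card'[OF fB] by simp
  then obtain y0 where "y0 \<noteq> 0" "\<And>y. y \<in> span B \<Longrightarrow> orthogonal y0 y"
    using orthogonal_to_subspace_exists by blast
  then have "S \<noteq> {0}" unfolding S_def using span_base orthogonal_commute by blast
  moreover have "A *v y \<in> S" if "y \<in> S" for y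
    unfolding S_def
  proof (intro CollectI ballI)
    fix x assume "x \<in> B"
    then obtain c where c: "A *v x = c *\<^sub>R x" using eB by blast
    have "orthogonal x y" using that \<open>x \<in> B\<close> by (simp add: S_def)
    then have "inner (A *v x) y = 0" by (simp add: c orthogonal_def)
    then show "orthogonal x (A *v y)" using symmetric_matrix_inner[OF sym, of x y] by (simp add: orthogonal_def)
  qed
  ultimately obtain x c where xS: "x \<in> S" and nx: "norm x = 1" and ex: "A *v x = c *\<^sub>R x"
    using symmetric_matrix_invariant_subspace_eigenvector[OF sym S] by metis
  have "x \<notin> B"
  proof
    assume "x \<in> B"
    then have "orthogonal x x" using xS by (simp add: S_def)
    then show False using nx by (simp add: orthogonal_def)
  qed
  show ?case
  proof (intro exI[of _ "insert x B"] conjI)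
    show "card (insert x B) = Suc k" using fB \<open>x \<notin> B\<close> cB by simp
    show "pairwise orthogonal (insert x B)"
      using oB xS unfolding pairwise_insert S_def by (auto simp: orthogonal_commute)
  qed (use fB eB nx ex in auto)
qed

theorem symmetric_matrix_orthogonally_diagonalizable:
  fixes A :: "real^'n^'n"
  assumes sym: "transpose A = A"
  obtains V \<mu> where "orthogonal_matrix V" "A = V ** diag_mat \<mu> ** transpose V"
proof -
  obtain B where fB: "finite B" and cB: "card B = CARD('n)" and oB: "pairwise orthogonal B"
    and eB: "\<forall>x\<in>B. norm x = 1 \<and> (\<exists>c. A *v x = c *\<^sub>R x)"
    using symmetric_matrix_orthonormal_eigenvectors[OF sym order.refl] by blast
  obtain f where bf: "bij_betw f (UNIV::'n set) B"
    using finite_same_card_bij[of "UNIV::'n set" B] fB cB by auto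
  then have fB': "f j \<in> B" for j by (auto simp: bij_betw_def)
  define V :: "real^'n^'n" where "V = (\<chi> i j. f j $ i)"
  define \<mu> where "\<mu> j = (SOME c. A *v f j = c *\<^sub>R f j)" for j
  have column_V: "column j V = f j" for j by (simp add: V_def column_def)
  have eigen: "A *v f j = \<mu> j *\<^sub>R f j" for j
    unfolding \<mu>_def using eB fB' by (metis (mono_tags, lifting) someI_ex)
  have oV: "orthogonal_matrix V"
    unfolding orthogonal_matrix_orthonormal_columns column_V
  proof (intro conjI allI impI)
    fix i show "norm (f i) = 1" using eB fB' by blast
  next
    fix i j :: 'n assume "i \<noteq> j"
    then have "f i \<noteq> f j" using bf by (auto simp: bij_betw_def inj_on_def)
    then show "orthogonal (f i) (f j)" using oB fB' by (auto simp: pairwise_def)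
  qed
  have "(A ** V) $ i $ j = (V ** diag_mat \<mu>) $ i $ j" for i j
  proof -
    have "(A ** V) $ i $ j = (A *v f j) $ i"
      by (simp add: matrix_matrix_mult_def matrix_vector_mult_def V_def)
    then show ?thesis by (simp add: eigen V_def)
  qed
  then have AV: "A ** V = V ** diag_mat \<mu>" by (simp add: vec_eq_iff)
  have "A = A ** (V ** transpose V)" using oV by (simp add: orthogonal_matrix_def)
  also have "\<dots> = V ** diag_mat \<mu> ** transpose V" by (simp add: matrix_mul_assoc AV)
  finally show ?thesis using that oV by blast
qed

subsection \<open>Functions of a symmetric matrix\<close>

definition orth_diag :: "real^'n^'n \<Rightarrow> ('n \<Rightarrow> real) \<Rightarrow> real^'n^'n" where
  "orth_diag V d = V ** diag_mat d ** transpose V"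

context
  fixes V :: "real^'n^'n"
  assumes orthogonal: "orthogonal_matrix V"
begin

lemma orth_diag_mult: "orth_diag V a ** orth_diag V b = orth_diag V (\<lambda>k. a k * b k)"
proof -
  have "orth_diag V a ** orth_diag V b = V ** diag_mat a ** (transpose V ** V) ** diag_mat b ** transpose V"
    by (simp add: orth_diag_def matrix_mul_assoc)
  also have "\<dots> = V ** (diag_mat a ** diag_mat b) ** transpose V"
    using orthogonal by (simp add: orthogonal_matrix_def matrix_mul_assoc)
  finally show ?thesis by (simp add: orth_diag_def diag_mat_mult_diag_mat)
qed

lemma orth_diag_diff: "orth_diag V a - orth_diag V b = orth_diag V (\<lambda>k. a k - b k)"
  by (simp add: orth_diag_def diag_mat_diff[symmetric] matrix_diff_ldistrib matrix_diff_rdistrib)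

lemma orth_diag_uminus: "orth_diag V (\<lambda>k. - a k) = - orth_diag V a"
proof -
  have "diag_mat (\<lambda>k. - a k) = - diag_mat a" by (vector diag_mat_def)
  then show ?thesis by (simp add: orth_diag_def matrix_neg_ldistrib matrix_neg_rdistrib)
qed

lemma orth_diag_1: "orth_diag V (\<lambda>k. 1) = mat 1"
  using orthogonal by (simp add: orth_diag_def diag_mat_1 orthogonal_matrix_def)

lemma transpose_orth_diag: "transpose (orth_diag V a) = orth_diag V a"
  by (simp add: orth_diag_def matrix_transpose_mul matrix_mul_assoc)

lemma orth_diag_column: "orth_diag V a *v column k V = a k *\<^sub>R column k V"
proof -
  have column: "column k V = V *v axis k 1"
    by (simp add: column_def matrix_vector_mult_def axis_def vec_eq_iff if_distrib if_distribR
        sum.delta' cong: if_cong)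
  have "orth_diag V a *v column k V = V *v (diag_mat a *v ((transpose V ** V) *v axis k 1))"
    by (simp add: column orth_diag_def matrix_vector_mul_assoc matrix_mul_assoc)
  also have "\<dots> = V *v (a k *\<^sub>R axis k 1)"
  proof -
    have "diag_mat a *v axis k 1 = a k *\<^sub>R axis k (1::real)" by (simp add: vec_eq_iff axis_def)
    then show ?thesis using orthogonal by (simp add: orthogonal_matrix_def)
  qed
  finally show ?thesis by (simp add: column matrix_vector_mult_scaleR)
qed

lemma inner_orth_diag_quadratic:
  "inner w (orth_diag V a *v w) = (\<Sum>k\<in>UNIV. a k * ((transpose V *v w) $ k)\<^sup>2)"
proof -
  have "inner w (orth_diag V a *v w) = inner (transpose V *v w) (diag_mat a *v (transpose V *v w))"
    by (simp add: orth_diag_def matrix_vector_mul_assoc[symmetric] dot_lmul_matrix[symmetric])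
  then show ?thesis by (simp add: inner_vec_def power2_eq_square mult_ac)
qed

lemma norm_sq_transpose_coordinates: "(norm w)\<^sup>2 = (\<Sum>k\<in>UNIV. ((transpose V *v w) $ k)\<^sup>2)"
  using inner_orth_diag_quadratic[of w "\<lambda>k. 1"] by (simp add: orth_diag_1 power2_norm_eq_inner)

lemma inner_orth_diag:
  "inner (orth_diag V a) Y = (\<Sum>k\<in>UNIV. a k * inner (column k V) (Y *v column k V))"
proof -
  have entry: "orth_diag V a $ i $ j = (\<Sum>k\<in>UNIV. V $ i $ k * a k * V $ j $ k)" for i j
    by (simp add: orth_diag_def matrix_matrix_mult_def[of "V ** diag_mat a"] transpose_def)
  have "inner (orth_diag V a) Y = (\<Sum>i\<in>UNIV. \<Sum>j\<in>UNIV. \<Sum>k\<in>UNIV. a k * (V $ i $ k * (Y $ i $ j * V $ j $ k)))"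
    by (simp add: inner_vec_def entry sum_distrib_right sum_distrib_left mult_ac)
  also have "\<dots> = (\<Sum>k\<in>UNIV. \<Sum>i\<in>UNIV. \<Sum>j\<in>UNIV. a k * (V $ i $ k * (Y $ i $ j * V $ j $ k)))"
    by (subst sum.swap, subst (2) sum.swap) (rule refl)
  also have "\<dots> = (\<Sum>k\<in>UNIV. a k * inner (column k V) (Y *v column k V))"
    by (simp add: inner_vec_def column_def matrix_vector_mult_def sum_distrib_left)
  finally show ?thesis .
qed

lemma psd_orth_diag: "(\<And>k. 0 \<le> a k) \<Longrightarrow> psd (orth_diag V a)"
  unfolding psd_def by (simp add: transpose_orth_diag inner_orth_diag_quadratic sum_nonneg)

text \<open>Moreau decomposition: the positive and negative parts are orthogonal and the negative part
  has nonnegative inner product with every PSD matrix, which gives a Pythagorean inequality.\<close>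

lemma proj_psd_orth_diag: "proj_psd (orth_diag V \<mu>) = orth_diag V (\<lambda>k. max (\<mu> k) 0)"
proof -
  define A where "A = orth_diag V \<mu>"
  define P where "P = orth_diag V (\<lambda>k. max (\<mu> k) 0)"
  define N where "N = orth_diag V (\<lambda>k. max (- \<mu> k) 0)"
  have "P - A = orth_diag V (\<lambda>k. max (- \<mu> k) 0)"
    unfolding P_def A_def orth_diag_diff by (rule arg_cong[where f="orth_diag V"]) auto
  then have AP: "A - P = - N" unfolding N_def by (metis minus_diff_eq)
  have "psd P" unfolding P_def by (rule psd_orth_diag) simp
  have NP: "inner N P = 0"
    unfolding N_def P_def inner_orth_diag orth_diag_column by (rule sum.neutral) auto
  have NY: "0 \<le> inner N Y" if "psd Y" for Y
    unfolding N_def inner_orth_diag using that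
    by (intro sum_nonneg mult_nonneg_nonneg) (auto simp: psd_def)
  have pythagoras: "(norm (A - P))\<^sup>2 + (norm (P - Y))\<^sup>2 \<le> (norm (A - Y))\<^sup>2" if "psd Y" for Y
  proof -
    have "A - Y = - N + (P - Y)" using AP by (simp add: algebra_simps)
    from dot_norm[of "- N" "P - Y", folded this]
    have "(norm (A - Y))\<^sup>2 = (norm N)\<^sup>2 + 2 * inner N Y + (norm (P - Y))\<^sup>2"
      using NP by (simp add: inner_diff_right)
    then show ?thesis using NY[OF that] AP by simp
  qed
  have "proj_psd A = P"
    unfolding proj_psd_def
  proof (rule the_equality)
    show "psd P \<and> (\<forall>Y. psd Y \<longrightarrow> norm (A - P) \<le> norm (A - Y))"
      using \<open>psd P\<close> pythagoras
      by (smt (verit, best) norm_ge_zero power2_le_imp_le zero_le_power2)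
  next
    fix P' assume P': "psd P' \<and> (\<forall>Y. psd Y \<longrightarrow> norm (A - P') \<le> norm (A - Y))"
    then have "(norm (A - P'))\<^sup>2 \<le> (norm (A - P))\<^sup>2" using \<open>psd P\<close> by (simp add: power_mono)
    then have "(norm (P - P'))\<^sup>2 \<le> 0" using pythagoras[of P'] P' by linarith
    then show "P' = P" by simp
  qed
  then show ?thesis by (simp add: A_def P_def)
qed

lemma orth_diag_quadratic_lower_bound:
  assumes "\<And>k. e k = 0 \<or> m \<le> a k" and "orth_diag V e *v w = w"
  shows "m * (norm w)\<^sup>2 \<le> inner w (orth_diag V a *v w)"
proof -
  define y where "y = transpose V *v w"
  have "y = transpose V *v (orth_diag V e *v w)" using assms(2) by (simp add: y_def)
  also have "\<dots> = (transpose V ** V) *v (diag_mat e *v y)"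
    by (simp add: y_def orth_diag_def matrix_vector_mul_assoc matrix_mul_assoc del: transpose_matrix_vector)
  finally have "y = diag_mat e *v y" using orthogonal by (simp add: orthogonal_matrix_def)
  then have y: "y $ k = e k * y $ k" for k by (metis diag_mat_vector_nth)
  have "m * (y $ k)\<^sup>2 \<le> a k * (y $ k)\<^sup>2" for k
    using assms(1)[of k] y[of k] by (auto intro: mult_right_mono)
  then have "(\<Sum>k\<in>UNIV. m * (y $ k)\<^sup>2) \<le> (\<Sum>k\<in>UNIV. a k * (y $ k)\<^sup>2)" by (rule sum_mono)
  then show ?thesis
    by (simp add: norm_sq_transpose_coordinates inner_orth_diag_quadratic y_def sum_distrib_left)
qed

end

subsection \<open>Frobenius and spectral norms\<close>

lemma norm_le_entrywise:
  assumes "\<And>i j. \<bar>(A::real^'n^'m) $ i $ j\<bar> \<le> \<bar>B $ i $ j\<bar>"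
  shows "norm A \<le> norm B"
  by (rule norm_le_componentwise_cart, rule norm_le_componentwise_cart) (simp add: assms)

lemma norm_le_entrywise_sum_list:
  fixes A :: "real^'n^'m" and Bs :: "(real^'n^'m) list"
  assumes "\<And>i j. \<bar>A $ i $ j\<bar> \<le> c * (\<Sum>B\<leftarrow>Bs. \<bar>B $ i $ j\<bar>)" and "0 \<le> c"
  shows "norm A \<le> c * (\<Sum>B\<leftarrow>Bs. norm B)"
proof -
  define abs_mat where "abs_mat B = (\<chi> i j. \<bar>B $ i $ j\<bar>)" for B :: "real^'n^'m"
  have norm_abs_mat: "norm (abs_mat B) = norm B" for B
    by (intro antisym norm_le_entrywise) (simp_all add: abs_mat_def)
  have "(\<Sum>B\<leftarrow>Bs. abs_mat B) $ i $ j = (\<Sum>B\<leftarrow>Bs. \<bar>B $ i $ j\<bar>)" for i j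
    by (induction Bs) (simp_all add: abs_mat_def)
  moreover have "0 \<le> (\<Sum>B\<leftarrow>Bs. \<bar>B $ i $ j\<bar>)" for i j
    by (induction Bs) simp_all
  ultimately have "norm A \<le> norm (c *\<^sub>R (\<Sum>B\<leftarrow>Bs. abs_mat B))"
    using assms by (intro norm_le_entrywise) (simp add: abs_mult)
  also have "\<dots> \<le> c * (\<Sum>B\<leftarrow>Bs. norm (abs_mat B))"
  proof -
    have "norm (\<Sum>B\<leftarrow>Bs. abs_mat B) \<le> (\<Sum>B\<leftarrow>Bs. norm (abs_mat B))"
      by (induction Bs) (auto intro: norm_triangle_le add_left_mono)
    then show ?thesis using \<open>0 \<le> c\<close> by (simp add: mult_left_mono)
  qed
  finally show ?thesis by (simp add: norm_abs_mat)
qed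

lemma norm_sq_matrix_entries: "(norm (A::real^'n^'m))\<^sup>2 = (\<Sum>i\<in>UNIV. \<Sum>j\<in>UNIV. (A $ i $ j)\<^sup>2)"
  unfolding power2_norm_eq_inner by (simp add: inner_vec_def power2_eq_square)

lemma norm_transpose_matrix: "norm (transpose (A::real^'n^'m)) = norm A"
proof -
  have "(norm (transpose A))\<^sup>2 = (norm A)\<^sup>2"
    unfolding norm_sq_matrix_entries transpose_def vec_lambda_beta by (rule sum.swap)
  then show ?thesis by (simp add: power2_eq_iff_nonneg)
qed

lemma norm_vec_norm_rows: "norm (\<chi> i. norm ((A::real^'n^'m) $ i)) = norm A"
  by (simp add: norm_vec_def)

lemma norm_matrix_vector_le: "norm ((A::real^'n^'m) *v x) \<le> norm A * norm x"
proof -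
  have "norm (A *v x) \<le> norm ((norm x) *\<^sub>R (\<chi> i. norm (A $ i)))"
    by (rule norm_le_componentwise_cart)
      (simp add: matrix_vector_mul_component, metis Cauchy_Schwarz_ineq2 mult.commute)
  then show ?thesis by (simp add: norm_vec_norm_rows mult.commute)
qed

lemma norm_matrix_mult_le: "norm ((A::real^'n^'m) ** (B::real^'p^'n)) \<le> norm A * norm B"
proof -
  have "norm ((A ** B) $ i) \<le> norm B * norm (A $ i)" for i
    using norm_matrix_vector_le[of "transpose B" "A $ i"] by (simp only: matrix_mult_row norm_transpose_matrix)
  then have "norm (A ** B) \<le> norm ((norm B) *\<^sub>R (\<chi> i. norm (A $ i)))"
    by (intro norm_le_componentwise_cart) (simp add: abs_mult)
  then show ?thesis by (simp add: norm_vec_norm_rows mult.commute)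
qed

lemma norm_mult_projection_le:
  fixes R :: "real^'n^'n"
  assumes "transpose R = R" "R ** R = R"
  shows "norm ((M::real^'n^'m) ** R) \<le> norm M"
proof (rule norm_le_componentwise_cart)
  fix i
  have "(norm (R *v v))\<^sup>2 \<le> norm v * norm (R *v v)" for v :: "real^'n"
  proof -
    have "(norm (R *v v))\<^sup>2 = inner v (R *v (R *v v))"
      by (simp add: power2_norm_eq_inner symmetric_matrix_inner[OF assms(1)])
    also have "\<dots> = inner v (R *v v)" by (simp add: matrix_vector_mul_assoc assms(2))
    finally show ?thesis using norm_cauchy_schwarz by simp
  qed
  then have "norm (R *v v) \<le> norm v" for v :: "real^'n"
    by (metis mult_le_cancel_right norm_ge_zero order.refl power2_eq_square order_le_less)
  then show "norm ((M ** R) $ i) \<le> norm (M $ i)"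
    by (simp only: matrix_mult_row assms(1))
qed

lemma spec_norm_nonneg: "0 \<le> spec_norm (M::real^'n^'m)"
  unfolding spec_norm_def using matrix_component_le_onorm[of M undefined undefined] by simp

lemma spec_norm_le_norm: "spec_norm (M::real^'n^'m) \<le> norm M"
  unfolding spec_norm_def by (rule onorm_le) (rule norm_matrix_vector_le)

lemma norm_le_card_spec_norm: "norm (M::real^'n^'n) \<le> real CARD('n) * spec_norm M"
proof -
  have entry: "\<bar>M $ i $ j\<bar> \<le> spec_norm M" for i j
    unfolding spec_norm_def by (rule matrix_component_le_onorm)
  then have "norm M \<le> norm ((\<chi> i j. spec_norm M) :: real^'n^'n)"
    by (intro norm_le_entrywise) (simp, meson abs_ge_self order_trans)
  also have "\<dots> = real CARD('n) * spec_norm M"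
  proof -
    have "(norm ((\<chi> i j. spec_norm M) :: real^'n^'n))\<^sup>2 = (real CARD('n) * spec_norm M)\<^sup>2"
      unfolding norm_sq_matrix_entries by (simp add: power2_eq_square)
    then show ?thesis by (simp add: power2_eq_iff_nonneg spec_norm_nonneg)
  qed
  finally show ?thesis .
qed

lemma spec_norm_orthogonal_conj_le:
  assumes "orthogonal_matrix (Q::real^'n^'n)"
  shows "spec_norm (Q ** M ** transpose Q) \<le> spec_norm M"
  unfolding spec_norm_def
proof (rule onorm_le)
  have norm_Q: "norm (U *v y) = norm y" if "orthogonal_matrix U" for U :: "real^'n^'n" and y
    using that orthogonal_transformation_matrix orthogonal_transformation_norm by fastforce
  fix x
  have "norm ((Q ** M ** transpose Q) *v x) = norm (M *v (transpose Q *v x))"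
    using assms norm_Q by (simp add: matrix_vector_mul_assoc[symmetric] del: transpose_matrix_vector)
  also have "\<dots> \<le> onorm ((*v) M) * norm (transpose Q *v x)"
    by (rule onorm) simp
  finally show "norm ((Q ** M ** transpose Q) *v x) \<le> onorm ((*v) M) * norm x"
    using assms norm_Q[of "transpose Q"] by simp
qed

lemma orth_diag_eigenvalue_lower_bound:
  assumes "orthogonal_matrix V" and "diag_mat l + H = orth_diag V \<mu>"
    and "\<And>i. \<delta> \<le> \<bar>l i\<bar>" and "0 \<le> \<delta>"
  shows "\<delta> - norm H \<le> \<bar>\<mu> k\<bar>"
proof -
  define c where "c = column k V"
  have nc: "norm c = 1" using assms(1) unfolding c_def orthogonal_matrix_orthonormal_columns by blast
  have "(diag_mat l + H) *v c = \<mu> k *\<^sub>R c" unfolding assms(2) c_def by (rule orth_diag_column[OF assms(1)])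
  then have "norm (diag_mat l *v c + H *v c) = \<bar>\<mu> k\<bar>"
    using nc by (simp add: matrix_vector_mult_add_rdistrib)
  moreover have "norm (\<delta> *\<^sub>R c) \<le> norm (diag_mat l *v c)"
    by (rule norm_le_componentwise_cart) (use assms(3,4) in \<open>simp add: abs_mult mult_right_mono\<close>)
  moreover have "norm (H *v c) \<le> norm H" using norm_matrix_vector_le[of H c] nc by simp
  ultimately show ?thesis
    using norm_diff_ineq[of "diag_mat l *v c" "H *v c"] nc assms(4) by simp
qed

subsection \<open>Two estimates for spectral projections\<close>

lemma sylvester_lower_bound:
  fixes W R S :: "real^'n^'n" and d :: "'n \<Rightarrow> real"
  assumes "transpose R = R" and "W = W ** R" and "transpose S = S"
    and pos: "\<And>w. R *v w = w \<Longrightarrow> m * (norm w)\<^sup>2 \<le> inner w (S *v w)"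
    and rows: "\<And>i. W $ i \<noteq> 0 \<Longrightarrow> d i \<le> 0" and "0 < m"
  shows "m * norm W \<le> norm (W ** S - diag_mat d ** W)"
proof -
  have row: "R *v (W $ i) = W $ i" for i
    using arg_cong[OF assms(2), of "\<lambda>M. M $ i"] by (simp only: matrix_mult_row assms(1))
  have "inner W (W ** S) = (\<Sum>i\<in>UNIV. inner (W $ i) (S *v (W $ i)))"
    unfolding inner_vec_def by (simp only: matrix_mult_row assms(3))
  also have "\<dots> \<ge> (\<Sum>i\<in>UNIV. m * (norm (W $ i))\<^sup>2)"
    by (intro sum_mono pos row)
  finally have "m * (norm W)\<^sup>2 \<le> inner W (W ** S)"
    by (simp add: power2_norm_eq_inner inner_vec_def sum_distrib_left)
  moreover have "inner W (diag_mat d ** W) = (\<Sum>i\<in>UNIV. d i * inner (W $ i) (W $ i))"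
    unfolding inner_vec_def by (simp add: sum_distrib_left mult_ac)
  moreover have "\<dots> \<le> 0"
    using rows by (intro sum_nonpos) (metis inner_zero_left mult_nonpos_nonneg inner_ge_zero mult_zero_right)
  ultimately have "m * (norm W)\<^sup>2 \<le> inner W (W ** S - diag_mat d ** W)"
    by (simp add: inner_diff_right)
  also have "\<dots> \<le> norm W * norm (W ** S - diag_mat d ** W)" by (rule norm_cauchy_schwarz)
  finally show ?thesis using \<open>0 < m\<close>
    by (cases "W = 0") (auto simp: power2_eq_square mult.assoc)
qed

text \<open>R = R^2 and E + F = I give E R E = (E R E)^2 + (E R F)(E R F)^T.\<close>

lemma projection_diagonal_block_le:
  fixes E F R :: "real^'n^'n"
  assumes "E + F = mat 1" "E ** E = E" "F ** F = F" "transpose E = E" "transpose F = F"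
    and "transpose R = R" "R ** R = R"
  shows "norm (E ** R ** E) \<le> (norm (E ** R ** F))\<^sup>2 + (norm (E ** R ** E))\<^sup>2"
proof -
  have "E ** R ** E = E ** R ** (E + F) ** R ** E"
    by (simp add: assms(1,7) matrix_mul_assoc[symmetric])
  also have "\<dots> = E ** R ** (E ** E) ** R ** E + E ** R ** (F ** F) ** R ** E"
    by (simp add: assms(2,3) matrix_add_ldistrib matrix_add_rdistrib)
  also have "\<dots> = (E ** R ** E) ** (E ** R ** E) + (E ** R ** F) ** transpose (E ** R ** F)"
    by (simp add: assms(4-6) matrix_transpose_mul matrix_mul_assoc)
  finally have "norm (E ** R ** E) \<le> norm (E ** R ** E) * norm (E ** R ** E)
      + norm (E ** R ** F) * norm (transpose (E ** R ** F))"
    by (metis norm_triangle_le add_mono norm_matrix_mult_le)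
  then show ?thesis by (simp add: norm_transpose_matrix power2_eq_square)
qed

lemma le_two_sq_if_le_sq_add_sq:
  fixes p q :: real
  assumes "p \<le> q\<^sup>2 + p\<^sup>2" and "p \<le> 1 / 2"
  shows "p \<le> 2 * q\<^sup>2"
proof (cases "0 \<le> p")
  case True
  then have "p\<^sup>2 \<le> p / 2" using mult_left_mono[OF assms(2) True] by (simp add: power2_eq_square)
  then show ?thesis using assms(1) by simp
next
  case False
  then show ?thesis using zero_le_power2[of q] by linarith
qed

subsection \<open>The perturbed positive spectral projection\<close>

locale positive_spectral_projection =
  fixes l :: "'n::finite \<Rightarrow> real" and H Pr :: "real^'n^'n" and \<delta> L :: real
  assumes gap: "\<And>i. \<delta> \<le> \<bar>l i\<bar>" and gap_pos: "0 < \<delta>" and bounded: "\<And>i. \<bar>l i\<bar> \<le> L"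
    and symmetric_H: "transpose H = H" and small_H: "16 * norm H \<le> \<delta>"
    and symmetric_Pr: "transpose Pr = Pr" and idempotent_Pr: "Pr ** Pr = Pr"
    and commute: "(diag_mat l + H) ** Pr = Pr ** (diag_mat l + H)"
    and positive_on_range:
      "\<And>w. Pr *v w = w \<Longrightarrow> \<delta> / 2 * (norm w)\<^sup>2 \<le> inner w ((diag_mat l + H) *v w)"
    and negative_on_kernel:
      "\<And>w. (mat 1 - Pr) *v w = w \<Longrightarrow> \<delta> / 2 * (norm w)\<^sup>2 \<le> inner w (- (diag_mat l + H) *v w)"
begin

definition Epos :: "real^'n^'n" where "Epos = diag_mat (\<lambda>i. if 0 < l i then 1 else 0)"
definition Eneg :: "real^'n^'n" where "Eneg = diag_mat (\<lambda>i. if l i < 0 then 1 else 0)"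
definition Pc :: "real^'n^'n" where "Pc = mat 1 - Pr"

lemma l_nonzero: "l i \<noteq> 0"
  using gap[of i] gap_pos by auto

lemma sign_cases:
  obtains "0 < l i" "0 < l j" | "l i < 0" "l j < 0" | "l i < 0" "0 < l j" | "0 < l i" "l j < 0"
  using l_nonzero[of i] l_nonzero[of j] by (meson linorder_neqE_linordered_idom)

lemma Eneg_add_Epos: "Eneg + Epos = mat 1"
proof -
  have "(\<lambda>k. (if l k < 0 then 1 else 0) + (if 0 < l k then 1 else (0::real))) = (\<lambda>k. 1)"
    using l_nonzero by (force simp: fun_eq_iff)
  then show ?thesis by (simp add: Eneg_def Epos_def diag_mat_add diag_mat_1)
qed

lemma idempotent_Epos: "Epos ** Epos = Epos" and idempotent_Eneg: "Eneg ** Eneg = Eneg"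
  by (simp_all add: Epos_def Eneg_def diag_mat_mult_diag_mat if_distrib cong: if_cong)

lemma symmetric_Epos: "transpose Epos = Epos" and symmetric_Eneg: "transpose Eneg = Eneg"
  by (simp_all add: Epos_def Eneg_def)

lemma diag_mat_commute_Epos: "diag_mat l ** Epos = Epos ** diag_mat l"
  and diag_mat_commute_Eneg: "diag_mat l ** Eneg = Eneg ** diag_mat l"
  by (simp_all add: Epos_def Eneg_def diag_mat_mult_diag_mat mult.commute)

lemma symmetric_Pc: "transpose Pc = Pc" and idempotent_Pc: "Pc ** Pc = Pc"
  by (simp_all add: Pc_def transpose_diff symmetric_Pr matrix_diff_ldistrib matrix_diff_rdistrib
      idempotent_Pr)

lemma Pr_nth_commute: "Pr $ i $ j = Pr $ j $ i"
  using symmetric_Pr by (metis transpose_def vec_lambda_beta)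

lemma norm_Eneg_mult_le: "norm (Eneg ** M) \<le> norm M"
  and norm_Epos_mult_le: "norm (Epos ** M) \<le> norm M"
  by (simp_all add: norm_le_entrywise Epos_def Eneg_def)

lemma norm_Eneg_Pr_le: "\<delta> / 2 * norm (Eneg ** Pr) \<le> norm H"
proof -
  have "\<delta> / 2 * norm (Eneg ** Pr) \<le> norm (Eneg ** Pr ** (diag_mat l + H) - diag_mat l ** (Eneg ** Pr))"
  proof (rule sylvester_lower_bound[OF symmetric_Pr _ _ positive_on_range])
    show "Eneg ** Pr = Eneg ** Pr ** Pr" by (simp add: matrix_mul_assoc[symmetric] idempotent_Pr)
    show "transpose (diag_mat l + H) = diag_mat l + H" by (simp add: transpose_add symmetric_H)
  next
    fix i assume "(Eneg ** Pr) $ i \<noteq> 0"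
    then show "l i \<le> 0" by (auto simp: Eneg_def vec_eq_iff split: if_splits)
  qed (use gap_pos in simp_all)
  also have "Eneg ** Pr ** (diag_mat l + H) - diag_mat l ** (Eneg ** Pr) = Eneg ** (H ** Pr)"
    by (simp add: matrix_mul_assoc[symmetric] flip: commute)
      (simp add: matrix_mul_assoc diag_mat_commute_Eneg matrix_add_ldistrib matrix_add_rdistrib)
  also have "norm (Eneg ** (H ** Pr)) \<le> norm H"
    using norm_mult_projection_le[OF symmetric_Pr idempotent_Pr, of H] norm_Eneg_mult_le
    by (metis matrix_mul_assoc order_trans)
  finally show ?thesis .
qed

lemma commute_Pc: "(diag_mat l + H) ** Pc = Pc ** (diag_mat l + H)"
  by (simp add: Pc_def matrix_diff_ldistrib matrix_diff_rdistrib commute)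

lemma norm_Epos_Pc_le: "\<delta> / 2 * norm (Epos ** Pc) \<le> norm H"
proof -
  have "\<delta> / 2 * norm (Epos ** Pc)
      \<le> norm (Epos ** Pc ** (- (diag_mat l + H)) - diag_mat (\<lambda>i. - l i) ** (Epos ** Pc))"
  proof (rule sylvester_lower_bound[OF symmetric_Pc])
    show "Epos ** Pc = Epos ** Pc ** Pc" by (simp add: matrix_mul_assoc[symmetric] idempotent_Pc)
    show "transpose (- (diag_mat l + H)) = - (diag_mat l + H)"
      by (simp only: transpose_minus transpose_add symmetric_H transpose_diag_mat)
  next
    fix w assume "Pc *v w = w"
    then show "\<delta> / 2 * (norm w)\<^sup>2 \<le> inner w (- (diag_mat l + H) *v w)"
      using negative_on_kernel by (simp add: Pc_def)
  next
    fix i assume "(Epos ** Pc) $ i \<noteq> 0"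
    then show "- l i \<le> 0" by (auto simp: Epos_def vec_eq_iff split: if_splits)
  qed (use gap_pos in simp)
  also have "Epos ** Pc ** (- (diag_mat l + H)) - diag_mat (\<lambda>i. - l i) ** (Epos ** Pc)
      = - (Epos ** (H ** Pc))"
  proof -
    have "Epos ** Pc ** (- (diag_mat l + H)) = - (Epos ** ((diag_mat l + H) ** Pc))"
      by (simp only: matrix_neg_rdistrib matrix_mul_assoc commute_Pc)
    also have "\<dots> = - (Epos ** diag_mat l ** Pc) - Epos ** (H ** Pc)"
      by (simp add: matrix_add_rdistrib matrix_add_ldistrib matrix_mul_assoc)
    moreover have "diag_mat (\<lambda>i. - l i) ** (Epos ** Pc) = - (Epos ** diag_mat l ** Pc)"
    proof -
      have "diag_mat (\<lambda>i. - l i) = - diag_mat l" by (vector diag_mat_def)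
      then show ?thesis by (simp add: matrix_neg_ldistrib matrix_mul_assoc diag_mat_commute_Epos)
    qed
    ultimately show ?thesis by simp
  qed
  also have "norm (- (Epos ** (H ** Pc))) \<le> norm H"
    using norm_mult_projection_le[OF symmetric_Pc idempotent_Pc, of H] norm_Epos_mult_le
    by (metis norm_minus_cancel matrix_mul_assoc order_trans)
  finally show ?thesis .
qed

definition Pr_off :: "real^'n^'n" where "Pr_off = Eneg ** Pr ** Epos"
definition Pr_neg :: "real^'n^'n" where "Pr_neg = Eneg ** Pr ** Eneg"
definition Pc_pos :: "real^'n^'n" where "Pc_pos = Epos ** Pc ** Epos"

lemma Pr_off_nth: "Pr_off $ i $ j = (if l i < 0 \<and> 0 < l j then Pr $ i $ j else 0)"
  by (simp add: Pr_off_def Eneg_def Epos_def)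

lemma Pr_neg_nth: "Pr_neg $ i $ j = (if l i < 0 \<and> l j < 0 then Pr $ i $ j else 0)"
  by (simp add: Pr_neg_def Eneg_def)

lemma Pc_pos_nth:
  "Pc_pos $ i $ j = (if 0 < l i \<and> 0 < l j then (if i = j then 1 else 0) - Pr $ i $ j else 0)"
  by (simp add: Pc_pos_def Epos_def Pc_def mat_def)

lemma le_eighth_if_half_gap_le_norm_H:
  assumes "\<delta> / 2 * x \<le> norm H"
  shows "x \<le> 1 / 8"
proof -
  have "\<delta> * (8 * x) \<le> \<delta> * 1" using assms small_H by linarith
  then show ?thesis using gap_pos by simp
qed

lemma norm_Pr_off_le: "\<delta> / 2 * norm Pr_off \<le> norm H"
proof -
  have "norm Pr_off \<le> norm (Eneg ** Pr)"
    by (rule norm_le_entrywise) (simp add: Pr_off_nth Eneg_def)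
  then have "\<delta> / 2 * norm Pr_off \<le> \<delta> / 2 * norm (Eneg ** Pr)"
    using gap_pos by (simp add: mult_left_mono)
  then show ?thesis using norm_Eneg_Pr_le by linarith
qed

lemma norm_Pr_off_le_eighth: "norm Pr_off \<le> 1 / 8"
  by (rule le_eighth_if_half_gap_le_norm_H[OF norm_Pr_off_le])

lemma norm_Pr_neg_le: "norm Pr_neg \<le> 2 * (norm Pr_off)\<^sup>2"
proof (rule le_two_sq_if_le_sq_add_sq)
  show "norm Pr_neg \<le> (norm Pr_off)\<^sup>2 + (norm Pr_neg)\<^sup>2"
    unfolding Pr_neg_def Pr_off_def
    by (rule projection_diagonal_block_le[OF Eneg_add_Epos idempotent_Eneg idempotent_Epos
          symmetric_Eneg symmetric_Epos symmetric_Pr idempotent_Pr])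
  have "norm Pr_neg \<le> norm (Eneg ** Pr)"
    by (rule norm_le_entrywise) (simp add: Pr_neg_nth Eneg_def)
  then show "norm Pr_neg \<le> 1 / 2"
    using le_eighth_if_half_gap_le_norm_H[OF norm_Eneg_Pr_le] by simp
qed

lemma norm_Pc_pos_le: "norm Pc_pos \<le> 2 * (norm Pr_off)\<^sup>2"
proof (rule le_two_sq_if_le_sq_add_sq)
  have "Epos + Eneg = mat 1" using Eneg_add_Epos by (simp add: add.commute)
  then have "norm Pc_pos \<le> (norm (Epos ** Pc ** Eneg))\<^sup>2 + (norm Pc_pos)\<^sup>2"
    unfolding Pc_pos_def
    by (rule projection_diagonal_block_le[OF _ idempotent_Epos idempotent_Eneg
          symmetric_Epos symmetric_Eneg symmetric_Pc idempotent_Pc])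
  moreover have "norm (Epos ** Pc ** Eneg) \<le> norm (transpose Pr_off)"
    by (rule norm_le_entrywise)
      (auto simp: Epos_def Eneg_def Pc_def mat_def transpose_def Pr_off_nth Pr_nth_commute)
  ultimately show "norm Pc_pos \<le> (norm Pr_off)\<^sup>2 + (norm Pc_pos)\<^sup>2"
    by (smt (verit) norm_ge_zero norm_transpose_matrix power_mono)
  have "norm Pc_pos \<le> norm (Epos ** Pc)"
    by (rule norm_le_entrywise) (simp add: Pc_pos_def Epos_def)
  then show "norm Pc_pos \<le> 1 / 2"
    using le_eighth_if_half_gap_le_norm_H[OF norm_Epos_Pc_le] by simp
qed

definition Dt :: "real^'n^'n" where "Dt = Pr - Epos"
definition R :: "real^'n^'n" where "R = Dt ** H - H ** Dt"

lemma norm_Dt_le: "norm Dt \<le> 3 * norm Pr_off"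
proof -
  have "norm Dt \<le> 1 * (\<Sum>B\<leftarrow>[Pc_pos, Pr_neg, Pr_off, transpose Pr_off]. norm B)"
  proof (rule norm_le_entrywise_sum_list)
    fix i j
    have "Dt $ i $ j = Pr $ i $ j - (if i = j \<and> 0 < l i then 1 else 0)"
      by (simp add: Dt_def Epos_def diag_mat_def)
    then show "\<bar>Dt $ i $ j\<bar> \<le> 1 * (\<Sum>B\<leftarrow>[Pc_pos, Pr_neg, Pr_off, transpose Pr_off]. \<bar>B $ i $ j\<bar>)"
      by (cases rule: sign_cases[of i j])
        (auto simp: Pc_pos_nth Pr_neg_nth Pr_off_nth transpose_def Pr_nth_commute[of i j]
          abs_minus_commute)
  qed simp
  then have "norm Dt \<le> norm Pc_pos + norm Pr_neg + 2 * norm Pr_off"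
    by (simp add: norm_transpose_matrix)
  moreover have "norm Pr_off * norm Pr_off \<le> norm Pr_off * (1 / 8)"
    by (intro mult_left_mono norm_Pr_off_le_eighth) simp
  ultimately show ?thesis
    using norm_Pc_pos_le norm_Pr_neg_le norm_ge_zero[of Pr_off] unfolding power2_eq_square
    by linarith
qed

lemma norm_R_le: "norm R \<le> 6 * norm Pr_off * norm H"
proof -
  have "norm R \<le> norm (Dt ** H) + norm (H ** Dt)" unfolding R_def by (rule norm_triangle_ineq4)
  also have "\<dots> \<le> norm Dt * norm H + norm H * norm Dt" by (intro add_mono norm_matrix_mult_le)
  also have "\<dots> = 2 * norm H * norm Dt" by simp
  also have "\<dots> \<le> 2 * norm H * (3 * norm Pr_off)" by (intro mult_left_mono norm_Dt_le) simp
  finally show ?thesis by (simp add: mult_ac)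
qed

lemma Pr_Epos_Dt_split: "H ** Pr = H ** Epos + H ** Dt" "Pr ** H = Epos ** H + Dt ** H"
  by (simp_all add: Dt_def matrix_diff_ldistrib matrix_diff_rdistrib)

lemma mult_Pr_nth:
  "((diag_mat l + H) ** Pr) $ i $ j
     = l i * Pr $ i $ j + H $ i $ j * (if 0 < l j then 1 else 0) + (H ** Dt) $ i $ j"
  by (simp add: matrix_add_rdistrib matrix_add_ldistrib Pr_Epos_Dt_split Epos_def)

lemma commutator_nth:
  "(l i - l j) * Pr $ i $ j
     = ((if 0 < l i then 1 else 0) - (if 0 < l j then 1 else 0)) * H $ i $ j + R $ i $ j"
proof -
  have "(Pr ** (diag_mat l + H)) $ i $ j
      = Pr $ i $ j * l j + (if 0 < l i then 1 else 0) * H $ i $ j + (Dt ** H) $ i $ j"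
    by (simp add: matrix_add_rdistrib matrix_add_ldistrib Pr_Epos_Dt_split Epos_def)
  then show ?thesis using commute mult_Pr_nth[of i j] unfolding R_def by (simp add: algebra_simps)
qed

lemma norm_Pr_off_le_off_block: "norm Pr_off \<le> 2 * norm (off_block l H) / \<delta>"
proof -
  have "norm (\<delta> *\<^sub>R Pr_off) \<le> 1 * (\<Sum>B\<leftarrow>[off_block l H, R]. norm B)"
  proof (rule norm_le_entrywise_sum_list)
    fix i j
    show "\<bar>(\<delta> *\<^sub>R Pr_off) $ i $ j\<bar> \<le> 1 * (\<Sum>B\<leftarrow>[off_block l H, R]. \<bar>B $ i $ j\<bar>)"
    proof (cases "l i < 0 \<and> 0 < l j")
      case True
      then have "\<delta> * \<bar>Pr $ i $ j\<bar> \<le> \<bar>l i - l j\<bar> * \<bar>Pr $ i $ j\<bar>"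
        using gap[of i] gap[of j] by (intro mult_right_mono) auto
      also have "\<dots> = \<bar>(l i - l j) * Pr $ i $ j\<bar>" by (rule abs_mult[symmetric])
      also have "\<dots> = \<bar>- H $ i $ j + R $ i $ j\<bar>" using commutator_nth[of i j] True by simp
      also have "\<dots> \<le> \<bar>H $ i $ j\<bar> + \<bar>R $ i $ j\<bar>" by linarith
      finally show ?thesis using True gap_pos by (simp add: Pr_off_nth off_block_def abs_mult)
    qed (auto simp: Pr_off_nth)
  qed simp
  then have "\<delta> * norm Pr_off \<le> norm (off_block l H) + 6 * norm H * norm Pr_off"
    using norm_R_le gap_pos by (simp add: mult_ac)
  moreover have "6 * norm H * norm Pr_off \<le> \<delta> / 2 * norm Pr_off"
    using small_H gap_pos by (intro mult_right_mono) simp_all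
  ultimately have "\<delta> * norm Pr_off \<le> 2 * norm (off_block l H)" by linarith
  then show ?thesis using gap_pos by (simp add: field_simps)
qed

definition lin_error :: "real^'n^'n" where
  "lin_error = (diag_mat l + H) ** Pr - diag_mat (\<lambda>i. max (l i) 0) - hadamard (Omega l) H"

lemma lin_error_minus_nth:
  "(lin_error - H ** Dt) $ i $ j = l i * Pr $ i $ j + H $ i $ j * (if 0 < l j then 1 else 0)
     - (if i = j then max (l i) 0 else 0) - Omega l $ i $ j * H $ i $ j"
  unfolding lin_error_def
  by (simp only: vector_minus_component mult_Pr_nth) (simp add: diag_mat_def hadamard_def)

lemma lin_error_minus_nth_pos:
  "0 < l i \<Longrightarrow> 0 < l j \<Longrightarrow> (lin_error - H ** Dt) $ i $ j = - (l i * Pc_pos $ i $ j)"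
  unfolding lin_error_minus_nth by (cases "i = j") (simp_all add: Pc_pos_nth Omega_def algebra_simps)

lemma lin_error_minus_nth_neg:
  "l i < 0 \<Longrightarrow> l j < 0 \<Longrightarrow> (lin_error - H ** Dt) $ i $ j = l i * Pr_neg $ i $ j"
  unfolding lin_error_minus_nth by (cases "i = j") (simp_all add: Pr_neg_nth Omega_def)

text \<open>Solving the commutator relation for Pr on the off-diagonal blocks is what produces the
  divided differences in Omega.\<close>

lemma lin_error_minus_nth_neg_pos:
  assumes "l i < 0" "0 < l j"
  shows "(lin_error - H ** Dt) $ i $ j = l i * R $ i $ j / (l i - l j)"
proof -
  have nz: "l i - l j \<noteq> 0" "l j - l i \<noteq> 0" "i \<noteq> j" using assms by auto
  have Pr: "Pr $ i $ j = (R $ i $ j - H $ i $ j) / (l i - l j)"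
    using commutator_nth[of i j] assms nz by (simp add: field_simps)
  show ?thesis
    using assms nz unfolding lin_error_minus_nth Pr
    by (simp add: Omega_def divide_simps) (simp add: algebra_simps)
qed

lemma lin_error_minus_nth_pos_neg:
  assumes "0 < l i" "l j < 0"
  shows "(lin_error - H ** Dt) $ i $ j = l i * R $ i $ j / (l i - l j)"
proof -
  have nz: "l i - l j \<noteq> 0" "i \<noteq> j" using assms by auto
  have Pr: "Pr $ i $ j = (H $ i $ j + R $ i $ j) / (l i - l j)"
    using commutator_nth[of i j] assms nz by (simp add: field_simps)
  show ?thesis
    using assms nz unfolding lin_error_minus_nth Pr
    by (simp add: Omega_def divide_simps) (simp add: algebra_simps)
qed

lemma abs_lin_error_minus_nth_le:
  "\<bar>(lin_error - H ** Dt) $ i $ j\<bar>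
     \<le> L * \<bar>Pc_pos $ i $ j\<bar> + L * \<bar>Pr_neg $ i $ j\<bar> + L / \<delta> * \<bar>R $ i $ j\<bar>"
proof -
  have L_nonneg: "0 \<le> L" using bounded[of i] by simp
  have nonneg: "0 \<le> L * \<bar>M $ i $ j\<bar>" "0 \<le> L / \<delta> * \<bar>M $ i $ j\<bar>" for M :: "real^'n^'n"
    using L_nonneg gap_pos by simp_all
  have diagonal: "\<bar>l i * M $ i $ j\<bar> \<le> L * \<bar>M $ i $ j\<bar>" for M :: "real^'n^'n"
    using bounded[of i] by (simp add: abs_mult mult_right_mono)
  have off_diagonal: "\<bar>l i * R $ i $ j / (l i - l j)\<bar> \<le> L / \<delta> * \<bar>R $ i $ j\<bar>"
    if "\<delta> \<le> \<bar>l i - l j\<bar>"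
  proof -
    have "\<bar>l i * R $ i $ j / (l i - l j)\<bar> = \<bar>l i\<bar> * \<bar>R $ i $ j\<bar> / \<bar>l i - l j\<bar>"
      by (simp add: abs_mult)
    also have "\<dots> \<le> L * \<bar>R $ i $ j\<bar> / \<delta>"
      using bounded[of i] L_nonneg gap_pos that by (intro frac_le mult_right_mono) auto
    finally show ?thesis by simp
  qed
  show ?thesis
  proof (cases rule: sign_cases[of i j])
    case 1
    then show ?thesis
      using lin_error_minus_nth_pos diagonal[of Pc_pos] nonneg[of Pr_neg] nonneg[of R] by simp
  next
    case 2
    then show ?thesis
      using lin_error_minus_nth_neg diagonal[of Pr_neg] nonneg[of Pc_pos] nonneg[of R] by simp
  next
    case 3
    then show ?thesis
      using lin_error_minus_nth_neg_pos off_diagonal gap[of i] gap[of j] nonneg[of Pc_pos] nonneg[of Pr_neg]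
      by simp
  next
    case 4
    then show ?thesis
      using lin_error_minus_nth_pos_neg off_diagonal gap[of i] gap[of j] nonneg[of Pc_pos] nonneg[of Pr_neg]
      by simp
  qed
qed

lemma norm_lin_error_le:
  "norm lin_error \<le> (1 + L + L / \<delta>) * (norm (H ** Dt) + norm Pc_pos + norm Pr_neg + norm R)"
proof -
  define c where "c = 1 + L + L / \<delta>"
  have L_nonneg: "0 \<le> L" using bounded[of undefined] by simp
  then have c_ge_1: "1 \<le> c" using gap_pos by (simp add: c_def)
  have "norm lin_error \<le> c * (\<Sum>B\<leftarrow>[H ** Dt, Pc_pos, Pr_neg, R]. norm B)"
  proof (rule norm_le_entrywise_sum_list)
    fix i j
    have "L * \<bar>Pc_pos $ i $ j\<bar> + L * \<bar>Pr_neg $ i $ j\<bar> + L / \<delta> * \<bar>R $ i $ j\<bar>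
        \<le> c * \<bar>Pc_pos $ i $ j\<bar> + c * \<bar>Pr_neg $ i $ j\<bar> + c * \<bar>R $ i $ j\<bar>"
      using L_nonneg gap_pos by (intro add_mono mult_right_mono) (simp_all add: c_def)
    moreover have "\<bar>(H ** Dt) $ i $ j\<bar> \<le> c * \<bar>(H ** Dt) $ i $ j\<bar>"
      using mult_right_mono[OF c_ge_1 abs_ge_zero] by simp
    moreover have "\<bar>lin_error $ i $ j\<bar>
        \<le> \<bar>(H ** Dt) $ i $ j\<bar> + \<bar>(lin_error - H ** Dt) $ i $ j\<bar>"
      by simp
    ultimately have "\<bar>lin_error $ i $ j\<bar> \<le> c * \<bar>(H ** Dt) $ i $ j\<bar> + c * \<bar>Pc_pos $ i $ j\<bar>
        + c * \<bar>Pr_neg $ i $ j\<bar> + c * \<bar>R $ i $ j\<bar>"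
      using abs_lin_error_minus_nth_le[of i j] by linarith
    then show "\<bar>lin_error $ i $ j\<bar> \<le> c * (\<Sum>B\<leftarrow>[H ** Dt, Pc_pos, Pr_neg, R]. \<bar>B $ i $ j\<bar>)"
      by (simp add: distrib_left add.assoc)
  qed (use c_ge_1 in simp)
  then show ?thesis by (simp add: c_def add.assoc)
qed

lemma lin_error_terms_le:
  "norm (H ** Dt) + norm Pc_pos + norm Pr_neg + norm R
     \<le> 2 * norm (off_block l H) / \<delta> * norm H * (9 + 8 / \<delta>)"
proof -
  define x where "x = norm Pr_off"
  define h where "h = norm H"
  have "norm (H ** Dt) \<le> 3 * x * h"
    using norm_matrix_mult_le[of H Dt] mult_left_mono[OF norm_Dt_le norm_ge_zero[of H]]
    by (simp add: x_def h_def mult_ac)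
  then have "norm (H ** Dt) + norm Pc_pos + norm Pr_neg + norm R \<le> 9 * x * h + 4 * x\<^sup>2"
    using norm_Pc_pos_le norm_Pr_neg_le norm_R_le unfolding x_def h_def by linarith
  also have "\<dots> \<le> x * h * (9 + 8 / \<delta>)"
  proof -
    have "x \<le> 2 * h / \<delta>" using norm_Pr_off_le gap_pos by (simp add: x_def h_def field_simps)
    then have "x\<^sup>2 \<le> x * (2 * h / \<delta>)"
      unfolding power2_eq_square by (rule mult_left_mono) (simp add: x_def)
    moreover have "x * h * (9 + 8 / \<delta>) = 9 * x * h + 4 * (x * (2 * h / \<delta>))"
      by (simp add: algebra_simps)
    ultimately show ?thesis by linarith
  qed
  also have "\<dots> \<le> 2 * norm (off_block l H) / \<delta> * h * (9 + 8 / \<delta>)"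
    using norm_Pr_off_le_off_block gap_pos by (intro mult_right_mono) (simp_all add: x_def h_def)
  finally show ?thesis by (simp only: h_def)
qed

theorem norm_lin_error_le_off_block:
  "norm lin_error \<le> (1 + L + L / \<delta>) * (2 / \<delta>) * (9 + 8 / \<delta>) * norm (off_block l H) * norm H"
proof -
  have "0 \<le> 1 + L + L / \<delta>" using bounded[of undefined] gap_pos by simp
  then have "norm lin_error
      \<le> (1 + L + L / \<delta>) * (2 * norm (off_block l H) / \<delta> * norm H * (9 + 8 / \<delta>))"
    by (intro order_trans[OF norm_lin_error_le] mult_left_mono lin_error_terms_le)
  also have "\<dots> = (1 + L + L / \<delta>) * (2 / \<delta>) * (9 + 8 / \<delta>) * norm (off_block l H) * norm H"
    using gap_pos by (simp add: field_simps)
  finally show ?thesis .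
qed
end

lemma proj_psd_orthogonal_conj:
  assumes "orthogonal_matrix Q" and "transpose M = M"
  shows "proj_psd (Q ** M ** transpose Q) = Q ** proj_psd M ** transpose Q"
proof -
  obtain V \<mu> where V: "orthogonal_matrix V" and M: "M = orth_diag V \<mu>"
    using symmetric_matrix_orthogonally_diagonalizable[OF assms(2)] unfolding orth_diag_def by blast
  have conj: "Q ** orth_diag V a ** transpose Q = orth_diag (Q ** V) a" for a
    by (simp add: orth_diag_def matrix_transpose_mul matrix_mul_assoc)
  show ?thesis
    using proj_psd_orth_diag[OF orthogonal_matrix_mul[OF assms(1) V]] proj_psd_orth_diag[OF V]
    by (simp add: M conj)
qed

lemma proj_psd_diag_mat: "proj_psd (diag_mat l) = diag_mat (\<lambda>i. max (l i) 0)"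
  using proj_psd_orth_diag[OF orthogonal_matrix_id, of l] by (simp add: orth_diag_def)

lemma invertible_orthogonal_conj_diag_mat_nonzero:
  assumes "invertible (Q ** diag_mat l ** transpose Q)" and "orthogonal_matrix Q"
  shows "l i \<noteq> 0"
proof -
  have "det (Q ** diag_mat l ** transpose Q) \<noteq> 0" using assms(1) by (simp add: invertible_det_nz)
  then have "det (diag_mat l) \<noteq> 0" by (simp add: det_mul)
  moreover have "det (diag_mat l) = (\<Prod>i\<in>UNIV. l i)" by (subst det_diagonal) (simp_all add: diag_mat_def)
  ultimately show ?thesis by simp
qed

theorem proj_psd_diag_mat_perturbation:
  fixes l :: "'n::finite \<Rightarrow> real" and H :: "real^'n^'n"
  assumes gap: "\<And>i. \<delta> \<le> \<bar>l i\<bar>" and "0 < \<delta>" and bounded: "\<And>i. \<bar>l i\<bar> \<le> L"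
    and "transpose H = H" and small: "16 * norm H \<le> \<delta>"
  shows "norm (proj_psd (diag_mat l + H) - proj_psd (diag_mat l) - hadamard (Omega l) H)
           \<le> (1 + L + L / \<delta>) * (2 / \<delta>) * (9 + 8 / \<delta>) * norm (off_block l H) * norm H"
proof -
  have "transpose (diag_mat l + H) = diag_mat l + H" by (simp add: transpose_add assms(4))
  then obtain V \<mu> where V: "orthogonal_matrix V" and A: "diag_mat l + H = orth_diag V \<mu>"
    using symmetric_matrix_orthogonally_diagonalizable unfolding orth_diag_def by blast
  have eigenvalue_gap: "\<delta> / 2 \<le> \<bar>\<mu> k\<bar>" for k
    using orth_diag_eigenvalue_lower_bound[OF V A gap, of k] \<open>0 < \<delta>\<close> small by linarith
  define e where "e k = (if 0 < \<mu> k then 1 else (0::real))" for k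
  have proj: "proj_psd (diag_mat l + H) = (diag_mat l + H) ** orth_diag V e"
    unfolding A proj_psd_orth_diag[OF V] orth_diag_mult[OF V]
    by (rule arg_cong[where f = "orth_diag V"]) (auto simp: e_def)
  interpret positive_spectral_projection l H "orth_diag V e" \<delta> L
  proof
    show "orth_diag V e ** orth_diag V e = orth_diag V e"
      unfolding orth_diag_mult[OF V] by (rule arg_cong[where f = "orth_diag V"]) (auto simp: e_def)
    show "(diag_mat l + H) ** orth_diag V e = orth_diag V e ** (diag_mat l + H)"
      unfolding A orth_diag_mult[OF V] by (simp add: mult.commute)
    show "\<delta> / 2 * (norm w)\<^sup>2 \<le> inner w ((diag_mat l + H) *v w)" if "orth_diag V e *v w = w" for w
      unfolding A
    proof (rule orth_diag_quadratic_lower_bound[OF V _ that])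
      show "e k = 0 \<or> \<delta> / 2 \<le> \<mu> k" for k using eigenvalue_gap[of k] by (auto simp: e_def)
    qed
    show "\<delta> / 2 * (norm w)\<^sup>2 \<le> inner w (- (diag_mat l + H) *v w)" if "(mat 1 - orth_diag V e) *v w = w" for w
      unfolding A orth_diag_uminus[OF V, symmetric]
    proof (rule orth_diag_quadratic_lower_bound[OF V])
      show "orth_diag V (\<lambda>k. 1 - e k) *v w = w"
        using that by (simp add: orth_diag_1[OF V, symmetric] orth_diag_diff[OF V])
      show "1 - e k = 0 \<or> \<delta> / 2 \<le> - \<mu> k" for k using eigenvalue_gap[of k] by (auto simp: e_def)
    qed
  qed (use assms transpose_orth_diag[OF V] in simp_all)
  show ?thesis
    using norm_lin_error_le_off_block by (simp add: proj proj_psd_diag_mat lin_error_def)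
qed

theorem proj_psd_orthogonal_conj_perturbation:
  fixes l :: "'n::finite \<Rightarrow> real" and Q H :: "real^'n^'n"
  assumes Q: "orthogonal_matrix Q" and gap: "\<And>i. \<delta> \<le> \<bar>l i\<bar>" and "0 < \<delta>"
    and bounded: "\<And>i. \<bar>l i\<bar> \<le> L" and "transpose H = H"
    and small: "16 * real CARD('n) * spec_norm H \<le> \<delta>"
  shows "spec_norm (proj_psd (Q ** diag_mat l ** transpose Q + H) - proj_psd (Q ** diag_mat l ** transpose Q)
           - Q ** hadamard (Omega l) (transpose Q ** H ** Q) ** transpose Q)
         \<le> (1 + L + L / \<delta>) * (2 / \<delta>) * (9 + 8 / \<delta>) * (real CARD('n))\<^sup>2
             * spec_norm (off_block l (transpose Q ** H ** Q)) * spec_norm H"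
proof -
  define Ht where "Ht = transpose Q ** H ** Q"
  define K where "K = (1 + L + L / \<delta>) * (2 / \<delta>) * (9 + 8 / \<delta>)"
  define n where "n = real CARD('n)"
  have "0 \<le> K" using bounded[of undefined] \<open>0 < \<delta>\<close> by (simp add: K_def)
  have Ht_symmetric: "transpose Ht = Ht"
    by (simp add: Ht_def matrix_transpose_mul matrix_mul_assoc assms(5))
  have "Q ** transpose Q = mat 1" using Q by (simp add: orthogonal_matrix_def)
  then have H: "H = Q ** Ht ** transpose Q"
    by (simp add: Ht_def matrix_mul_assoc) (simp add: matrix_mul_assoc[symmetric])
  have norm_Ht: "norm Ht \<le> n * spec_norm H"
    using norm_le_card_spec_norm[of Ht] spec_norm_orthogonal_conj_le[of "transpose Q" H] Q
    by (simp add: Ht_def n_def) (meson mult_left_mono of_nat_0_le_iff order_trans)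
  then have "16 * norm Ht \<le> \<delta>" using small by (simp add: n_def)
  have "proj_psd (Q ** (diag_mat l + Ht) ** transpose Q) = Q ** proj_psd (diag_mat l + Ht) ** transpose Q"
    by (rule proj_psd_orthogonal_conj[OF Q]) (simp add: transpose_add Ht_symmetric)
  moreover have "proj_psd (Q ** diag_mat l ** transpose Q) = Q ** proj_psd (diag_mat l) ** transpose Q"
    by (rule proj_psd_orthogonal_conj[OF Q]) simp
  ultimately have "spec_norm (proj_psd (Q ** diag_mat l ** transpose Q + H)
      - proj_psd (Q ** diag_mat l ** transpose Q) - Q ** hadamard (Omega l) Ht ** transpose Q)
    = spec_norm (Q ** (proj_psd (diag_mat l + Ht) - proj_psd (diag_mat l) - hadamard (Omega l) Ht)
        ** transpose Q)"
    by (simp add: H matrix_add_ldistrib matrix_add_rdistrib matrix_diff_ldistrib matrix_diff_rdistrib)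
  also have "\<dots> \<le> norm (proj_psd (diag_mat l + Ht) - proj_psd (diag_mat l) - hadamard (Omega l) Ht)"
    using spec_norm_orthogonal_conj_le[OF Q] spec_norm_le_norm order_trans by metis
  also have "\<dots> \<le> K * norm (off_block l Ht) * norm Ht"
    unfolding K_def
    by (rule proj_psd_diag_mat_perturbation[OF gap \<open>0 < \<delta>\<close> bounded Ht_symmetric \<open>16 * norm Ht \<le> \<delta>\<close>])
  also have "\<dots> \<le> K * (n * spec_norm (off_block l Ht)) * (n * spec_norm H)"
    using norm_le_card_spec_norm[of "off_block l Ht"] norm_Ht \<open>0 \<le> K\<close>
    by (intro mult_mono mult_left_mono) (simp_all add: n_def spec_norm_nonneg)
  finally show ?thesis by (simp add: Ht_def K_def n_def power2_eq_square mult_ac)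
qed

theorem theorem2:
  fixes l :: "'n::{finite,linorder} \<Rightarrow> real" and Z Q :: "((real, 'n) vec, 'n) vec"
  assumes "transpose Z = Z"
    and "invertible Z"
    and "orthogonal_matrix Q"
    and "Z = Q ** diag_mat l ** transpose Q"
    and "\<And>i j. i \<le> j \<Longrightarrow> l j \<le> l i"
  shows "\<exists>C_EB > 0. \<exists>\<alpha>_EB > 0. \<forall>H.
           transpose H = H \<and> spec_norm H \<le> C_EB \<longrightarrow>
           spec_norm (proj_psd (Z + H) - proj_psd Z
                      - Q ** hadamard (Omega l) (transpose Q ** H ** Q) ** transpose Q)
             \<le> \<alpha>_EB * spec_norm (off_block l (transpose Q ** H ** Q)) * spec_norm H"
proof -
  have "l i \<noteq> 0" for i
    using invertible_orthogonal_conj_diag_mat_nonzero assms(2-4) by blast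
  define \<delta> where "\<delta> = Min (range (\<lambda>i. \<bar>l i\<bar>))"
  define L where "L = Max (range (\<lambda>i. \<bar>l i\<bar>))"
  define n where "n = real CARD('n)"
  have gap: "\<delta> \<le> \<bar>l i\<bar>" and bounded: "\<bar>l i\<bar> \<le> L" for i
    by (simp_all add: \<delta>_def L_def)
  have "0 < \<delta>"
    using Min_in[of "range (\<lambda>i. \<bar>l i\<bar>)"] \<open>\<And>i. l i \<noteq> 0\<close> by (auto simp: \<delta>_def)
  have "0 < n" by (simp add: n_def)
  define K where "K = (1 + L + L / \<delta>) * (2 / \<delta>) * (9 + 8 / \<delta>) * n\<^sup>2"
  have "0 < \<delta> / (16 * n)" and "0 < K"
    using \<open>0 < \<delta>\<close> \<open>0 < n\<close> bounded[of undefined] by (simp_all add: K_def add_pos_nonneg)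
  moreover have "spec_norm (proj_psd (Z + H) - proj_psd Z
                   - Q ** hadamard (Omega l) (transpose Q ** H ** Q) ** transpose Q)
          \<le> K * spec_norm (off_block l (transpose Q ** H ** Q)) * spec_norm H"
    if "transpose H = H" and "spec_norm H \<le> \<delta> / (16 * n)" for H
    using proj_psd_orthogonal_conj_perturbation[OF assms(3) gap \<open>0 < \<delta>\<close> bounded that(1)] that(2) \<open>0 < n\<close>
    by (simp add: assms(4) K_def n_def field_simps)
  ultimately show ?thesis by blast
qed

end
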